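(* Let $G=(V,E)$ be a network with $n$ sources $s_1,\dots,s_n$ and two terminals $t_1,t_2$, such that for every $i\in\{1,\dots,n\}$ and $j\in\{1,2\}$ the max-flow from $s_i$ to $t_j$ is at least $1$. Then there exists a linear network code over $\mathbb{F}=GF(2^m)$ such that each terminal $t_j$ can recover $\sum_{i=1}^n X_i$ from the symbols on its incoming edges.
   Context: A network is a finite directed acyclic graph $G=(V,E)$ (parallel edges allowed) in which every edge has unit capacity and carries one symbol of a finite field $\mathbb{F}$ per use. Sources are vertices with no incoming edges; source $s_i$ holds $X_i\in\mathbb{F}$, the $X_i$ independent and uniformly distributed (unit entropy). Terminals are vertices with no outgoing edges. In a linear network code the symbol on an edge leaving a non-source vertex is an $\mathbb{F}$-linear combination of the symbols on the edges entering its tail, and the symbol on an edge leaving a source is a multiple of the source symbol. *)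

theory Defs
  imports Complex_Main "HOL-Library.Cardinality" "HOL-Library.FuncSet"
begin

text \<open>A network: finite vertex set V, finite edge set E (edges are abstract
  identifiers, so parallel edges are allowed), tail/head maps, acyclic.
  Every edge has unit capacity.\<close>

definition network :: "'v set \<Rightarrow> 'e set \<Rightarrow> ('e \<Rightarrow> 'v) \<Rightarrow> ('e \<Rightarrow> 'v) \<Rightarrow> bool" where
  "network V E tail head \<longleftrightarrow> finite V \<and> finite E \<and>
     (\<forall>e\<in>E. tail e \<in> V \<and> head e \<in> V) \<and>
     acyclic {(tail e, head e) | e. e \<in> E}"

definition in_edges :: "'e set \<Rightarrow> ('e \<Rightarrow> 'v) \<Rightarrow> 'v \<Rightarrow> 'e set" where
  "in_edges E head v = {e \<in> E. head e = v}"

definition out_edges :: "'e set \<Rightarrow> ('e \<Rightarrow> 'v) \<Rightarrow> 'v \<Rightarrow> 'e set" where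
  "out_edges E tail v = {e \<in> E. tail e = v}"

definition is_flow :: "'v set \<Rightarrow> 'e set \<Rightarrow> ('e \<Rightarrow> 'v) \<Rightarrow> ('e \<Rightarrow> 'v) \<Rightarrow> 'v \<Rightarrow> 'v
                        \<Rightarrow> ('e \<Rightarrow> real) \<Rightarrow> bool" where
  "is_flow V E tail head s t f \<longleftrightarrow>
     (\<forall>e\<in>E. 0 \<le> f e \<and> f e \<le> 1) \<and>
     (\<forall>v\<in>V - {s, t}. (\<Sum>e\<in>in_edges E head v. f e) = (\<Sum>e\<in>out_edges E tail v. f e))"

definition flow_value :: "'e set \<Rightarrow> ('e \<Rightarrow> 'v) \<Rightarrow> ('e \<Rightarrow> 'v) \<Rightarrow> 'v \<Rightarrow> ('e \<Rightarrow> real) \<Rightarrow> real" where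
  "flow_value E tail head s f = (\<Sum>e\<in>out_edges E tail s. f e) - (\<Sum>e\<in>in_edges E head s. f e)"

definition max_flow :: "'v set \<Rightarrow> 'e set \<Rightarrow> ('e \<Rightarrow> 'v) \<Rightarrow> ('e \<Rightarrow> 'v) \<Rightarrow> 'v \<Rightarrow> 'v \<Rightarrow> real" where
  "max_flow V E tail head s t = Sup {flow_value E tail head s f | f. is_flow V E tail head s t f}"

text \<open>Y is the assignment of symbols to edges produced by the linear network code
  with source coefficients a and local coefficients \<beta>, when source s i holds X i
  (i = 1..n): an edge leaving a source carries a multiple of that source's symbol, an
  edge leaving a non-source vertex carries a linear combination of the symbols on the
  edges entering its tail.\<close>
definition linear_code_symbols ::
  "'e set \<Rightarrow> ('e \<Rightarrow> 'v) \<Rightarrow> ('e \<Rightarrow> 'v) \<Rightarrow> nat \<Rightarrow> (nat \<Rightarrow> 'v)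
   \<Rightarrow> ('e \<Rightarrow> 'f::field) \<Rightarrow> ('e \<Rightarrow> 'e \<Rightarrow> 'f) \<Rightarrow> (nat \<Rightarrow> 'f) \<Rightarrow> ('e \<Rightarrow> 'f) \<Rightarrow> bool" where
  "linear_code_symbols E tail head n s a \<beta> X Y \<longleftrightarrow>
     (\<forall>e\<in>E. (\<forall>i\<in>{1..n}. tail e = s i \<longrightarrow> Y e = a e * X i) \<and>
            (tail e \<notin> s ` {1..n} \<longrightarrow> Y e = (\<Sum>e'\<in>in_edges E head (tail e). \<beta> e' e * Y e')))"

end

theory Submission
  imports Defs
begin

(* Every max-flow hypothesis yields a directed path from each source to
   each terminal, so the edge set E "connects" all sources to both terminals.  Choose a
   subset H of E that still connects them and is minimal with this property.  Because
   there are only two terminals and the graph is acyclic, a minimal connecting H is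
   tree-like towards the terminals: from any vertex there is at most one H-path to a
   given terminal.  Consequently, if a source x reaches a vertex w \<noteq> x that still leads
   to a terminal, exactly one H-edge entering w is reached from x.  The code that sends on
   every H-edge e the sum of the X_k over the sources reaching tail e (all coefficients 1,
   edges outside H carry 0) is therefore a linear network code, and each terminal
   recovers the sum of all X_k by adding up its incoming H-symbols.  No property of the
   field is needed. *)

section \<open>Edge paths\<close>

primrec epath :: "'e set \<Rightarrow> ('e \<Rightarrow> 'v) \<Rightarrow> ('e \<Rightarrow> 'v) \<Rightarrow> 'v \<Rightarrow> 'e list \<Rightarrow> 'v \<Rightarrow> bool" where
  "epath H ta he u [] v \<longleftrightarrow> u = v"
| "epath H ta he u (e # p) v \<longleftrightarrow> e \<in> H \<and> ta e = u \<and> epath H ta he (he e) p v"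

lemma epath_append:
  "epath H ta he u (p @ q) w \<longleftrightarrow> (\<exists>v. epath H ta he u p v \<and> epath H ta he v q w)"
  by (induction p arbitrary: u) auto

lemma epath_snoc:
  "epath H ta he u (p @ [e]) w \<longleftrightarrow> epath H ta he u p (ta e) \<and> e \<in> H \<and> he e = w"
  by (auto simp: epath_append)

lemma epath_remove:
  "epath H ta he u p v \<Longrightarrow> e \<notin> set p \<Longrightarrow> epath (H - {e}) ta he u p v"
  by (induction p arbitrary: u) auto

lemma epath_split_at:
  assumes "epath H ta he u p v" and "e \<in> set p"
  shows "\<exists>p1 p2. epath H ta he u p1 (ta e) \<and> epath H ta he (he e) p2 v"
proof -
  obtain p1 p2 where "p = p1 @ e # p2" using assms(2) by (meson split_list)
  then show ?thesis using assms(1) by (auto simp: epath_append)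
qed

lemma epath_last_edge:
  assumes "epath H ta he u p w" and "u \<noteq> w"
  shows "\<exists>q e. epath H ta he u q (ta e) \<and> e \<in> H \<and> he e = w"
proof -
  have "p \<noteq> []" using assms by auto
  then obtain q e where "p = q @ [e]" by (metis rev_exhaust)
  then show ?thesis using assms(1) by (auto simp: epath_snoc)
qed

lemma epath_rtrancl:
  "epath H ta he u p v \<Longrightarrow> H \<subseteq> E \<Longrightarrow> (u, v) \<in> {(ta e, he e) | e. e \<in> E}\<^sup>*"
proof (induction p arbitrary: u)
  case (Cons e p)
  then have "(u, he e) \<in> {(ta e, he e) | e. e \<in> E}" and "(he e, v) \<in> {(ta e, he e) | e. e \<in> E}\<^sup>*"
    by auto
  then show ?case by (rule converse_rtrancl_into_rtrancl)
qed simp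

lemma acyclic_no_return:
  assumes "acyclic {(ta e, he e) | e. e \<in> E}" and "H \<subseteq> E" and "e \<in> E"
    and "epath H ta he (he e) p (ta e)"
  shows False
proof -
  have "(ta e, he e) \<in> {(ta e, he e) | e. e \<in> E}" using assms(3) by auto
  moreover have "(he e, ta e) \<in> {(ta e, he e) | e. e \<in> E}\<^sup>*"
    using epath_rtrancl[OF assms(4,2)] .
  ultimately have "(ta e, ta e) \<in> {(ta e, he e) | e. e \<in> E}\<^sup>+"
    by (meson rtrancl_into_trancl2)
  then show False using assms(1) by (simp add: acyclic_def)
qed

section \<open>From max-flow to paths\<close>

text \<open>A max-flow of at least 1 is witnessed by a flow of positive value (the set of flow
  values is nonempty, since the zero flow is feasible, and bounded by the out-degree).\<close>
lemma positive_flow_of_max_flow: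
  assumes "finite E" and "max_flow V E tail head s t \<ge> 1"
  shows "\<exists>f. is_flow V E tail head s t f \<and> flow_value E tail head s f > 0"
proof -
  define S where "S = {flow_value E tail head s f | f. is_flow V E tail head s t f}"
  have "is_flow V E tail head s t (\<lambda>_. 0)" by (simp add: is_flow_def)
  then have ne: "S \<noteq> {}" unfolding S_def by blast
  have bdd: "bdd_above S"
  proof (rule bdd_aboveI)
    fix x assume "x \<in> S"
    then obtain f where f: "is_flow V E tail head s t f" and x: "x = flow_value E tail head s f"
      unfolding S_def by blast
    have "(\<Sum>e\<in>out_edges E tail s. f e) \<le> (\<Sum>e\<in>out_edges E tail s. 1)"
      using f by (intro sum_mono) (auto simp: is_flow_def out_edges_def)
    moreover have "0 \<le> (\<Sum>e\<in>in_edges E head s. f e)"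
      using f by (intro sum_nonneg) (auto simp: is_flow_def in_edges_def)
    ultimately show "x \<le> real (card (out_edges E tail s))" using x by (simp add: flow_value_def)
  qed
  have "0 < Sup S" using assms(2) by (simp add: max_flow_def S_def)
  then obtain x where "x \<in> S" "0 < x" using less_cSup_iff[OF ne bdd] by blast
  then show ?thesis unfolding S_def by blast
qed

lemma sum_edges_by_endpoint:
  assumes "finite E" and "finite R"
  shows "(\<Sum>v\<in>R. \<Sum>e\<in>{e\<in>E. g e = v}. f e) = (\<Sum>e\<in>{e\<in>E. g e \<in> R}. f e)"
proof -
  have "(\<Sum>v\<in>R. \<Sum>e\<in>{e\<in>E. g e = v}. f e) = (\<Sum>v\<in>R. sum f {e. e \<in> {e\<in>E. g e \<in> R} \<and> g e = v})"
    by (intro sum.cong) auto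
  also have "\<dots> = (\<Sum>e\<in>{e\<in>E. g e \<in> R}. f e)"
    by (rule sum.group) (use assms in auto)
  finally show ?thesis .
qed

text \<open>Net outflow of a nonnegative edge function from a vertex set R that no edge leaves
  is nonpositive: every edge counted as leaving some vertex of R also enters R.\<close>
lemma closed_set_net_outflow:
  assumes finE: "finite E" and finR: "finite R" and fnn: "\<forall>e\<in>E. 0 \<le> f e"
    and closed: "\<forall>e\<in>E. tail e \<in> R \<longrightarrow> head e \<in> R"
  shows "(\<Sum>v\<in>R. (\<Sum>e\<in>out_edges E tail v. f e) - (\<Sum>e\<in>in_edges E head v. f e)) \<le> (0::real)"
proof -
  have "(\<Sum>e\<in>{e\<in>E. tail e \<in> R}. f e) \<le> (\<Sum>e\<in>{e\<in>E. head e \<in> R}. f e)"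
    using finE closed fnn by (intro sum_mono2) auto
  then show ?thesis
    using sum_edges_by_endpoint[OF finE finR, where g = tail and f = f]
      sum_edges_by_endpoint[OF finE finR, where g = head and f = f]
    by (simp add: sum_subtractf out_edges_def in_edges_def)
qed

text \<open>A flow of positive value from s to a vertex t without out-edges forces s \<noteq> t and a
  path from s to t: otherwise the set of vertices reachable from s is a closed set whose
  net outflow equals the flow value, by flow conservation.\<close>
lemma positive_flow_path:
  assumes net: "network V E tail head" and sV: "s \<in> V" and tout: "out_edges E tail t = {}"
    and f: "is_flow V E tail head s t f" and pos: "flow_value E tail head s f > 0"
  shows "s \<noteq> t \<and> (\<exists>p. epath E tail head s p t)"
proof -
  have finE: "finite E" and inV: "\<forall>e\<in>E. tail e \<in> V \<and> head e \<in> V" and finV: "finite V"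
    using net by (auto simp: network_def)
  have fnn: "\<forall>e\<in>E. 0 \<le> f e" using f by (simp add: is_flow_def)
  have "s \<noteq> t"
  proof
    assume "s = t"
    then have "flow_value E tail head s f = - (\<Sum>e\<in>in_edges E head s. f e)"
      using tout by (simp add: flow_value_def)
    moreover have "0 \<le> (\<Sum>e\<in>in_edges E head s. f e)"
      using fnn by (intro sum_nonneg) (auto simp: in_edges_def)
    ultimately show False using pos by linarith
  qed
  moreover have "\<exists>p. epath E tail head s p t"
  proof (rule ccontr)
    assume unreached: "\<nexists>p. epath E tail head s p t"
    define R where "R = {v\<in>V. \<exists>p. epath E tail head s p v}"
    let ?net = "\<lambda>v. (\<Sum>e\<in>out_edges E tail v. f e) - (\<Sum>e\<in>in_edges E head v. f e)"
    have finR: "finite R" and sR: "s \<in> R"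
      using finV sV unfolding R_def by (auto intro: exI[of _ "[]"])
    have closed: "\<forall>e\<in>E. tail e \<in> R \<longrightarrow> head e \<in> R"
    proof (intro ballI impI)
      fix e assume "e \<in> E" "tail e \<in> R"
      then obtain p where "epath E tail head s p (tail e)" unfolding R_def by blast
      then have "epath E tail head s (p @ [e]) (head e)" using \<open>e \<in> E\<close> by (simp add: epath_snoc)
      then show "head e \<in> R" unfolding R_def using inV \<open>e \<in> E\<close> by blast
    qed
    have conserved: "?net v = 0" if "v \<in> R - {s}" for v
    proof -
      have "v \<in> V - {s, t}" using that unreached unfolding R_def by auto
      then show ?thesis using f by (simp add: is_flow_def)
    qed
    have "(\<Sum>v\<in>R. ?net v) = ?net s + (\<Sum>v\<in>R - {s}. ?net v)" by (rule sum.remove[OF finR sR])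
    also have "\<dots> = flow_value E tail head s f" by (simp add: conserved flow_value_def)
    finally show False using closed_set_net_outflow[OF finE finR fnn closed] pos by linarith
  qed
  ultimately show ?thesis ..
qed

lemma max_flow_path:
  assumes net: "network V E tail head" and sV: "s \<in> V" and tout: "out_edges E tail t = {}"
    and mf: "max_flow V E tail head s t \<ge> 1"
  shows "s \<noteq> t \<and> (\<exists>p. epath E tail head s p t)"
proof -
  have "finite E" using net by (simp add: network_def)
  then obtain f where "is_flow V E tail head s t f" "flow_value E tail head s f > 0"
    using positive_flow_of_max_flow[OF _ mf] by blast
  then show ?thesis using positive_flow_path[OF net sV tout] by blast
qed

section \<open>Minimal connecting subgraphs\<close>

definition connects :: "'e set \<Rightarrow> ('e \<Rightarrow> 'v) \<Rightarrow> ('e \<Rightarrow> 'v) \<Rightarrow> nat \<Rightarrow> (nat \<Rightarrow> 'v) \<Rightarrow> 'v set \<Rightarrow> bool" where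
  "connects H ta he n s T \<longleftrightarrow> (\<forall>i\<in>{1..n}. \<forall>t\<in>T. \<exists>p. epath H ta he (s i) p t)"

text \<open>A finite connecting edge set contains an inclusion-minimal one (take one of least
  cardinality).\<close>
lemma minimal_connecting_subset:
  assumes "finite E" and "connects E ta he n s T"
  shows "\<exists>H\<subseteq>E. connects H ta he n s T \<and> (\<forall>e\<in>H. \<not> connects (H - {e}) ta he n s T)"
proof -
  obtain H where H: "H \<subseteq> E" "connects H ta he n s T"
    and least: "\<And>H'. H' \<subseteq> E \<Longrightarrow> connects H' ta he n s T \<Longrightarrow> card H \<le> card H'"
    using ex_has_least_nat[of "\<lambda>H. H \<subseteq> E \<and> connects H ta he n s T" E card] assms(2) by blast
  have "\<not> connects (H - {e}) ta he n s T" if "e \<in> H" for e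
  proof
    assume "connects (H - {e}) ta he n s T"
    then have "card H \<le> card (H - {e})" using least H(1) by blast
    moreover have "card (H - {e}) < card H"
      using that H(1) assms(1) by (meson card_Diff1_less finite_subset)
    ultimately show False by simp
  qed
  then show ?thesis using H by blast
qed

locale minimal_connection =
  fixes E :: "'e set" and ta he :: "'e \<Rightarrow> 'v" and n :: nat and s :: "nat \<Rightarrow> 'v"
    and t1 t2 :: 'v and H :: "'e set"
  assumes acyc: "acyclic {(ta e, he e) | e. e \<in> E}"
    and finE: "finite E"
    and HE: "H \<subseteq> E"
    and sinks: "\<forall>e\<in>E. ta e \<noteq> t1 \<and> ta e \<noteq> t2"
    and connecting: "connects H ta he n s {t1, t2}"
    and minimal: "\<forall>e\<in>H. \<not> connects (H - {e}) ta he n s {t1, t2}"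
begin

lemma critical_edge:
  assumes "e \<in> H"
  shows "\<exists>i\<in>{1..n}. \<exists>t\<in>{t1, t2}. (\<exists>r. epath H ta he (s i) r (ta e)) \<and>
           (\<exists>r. epath H ta he (he e) r t) \<and> (\<forall>p. \<not> epath (H - {e}) ta he (s i) p t)"
proof -
  obtain i t where i: "i \<in> {1..n}" and t: "t \<in> {t1, t2}"
    and cut: "\<forall>p. \<not> epath (H - {e}) ta he (s i) p t"
    using minimal assms unfolding connects_def by blast
  obtain p where p: "epath H ta he (s i) p t" using connecting i t unfolding connects_def by blast
  have "e \<in> set p" using p cut epath_remove by metis
  then show ?thesis using epath_split_at[OF p] i t cut by blast
qed

text \<open>Rerouting: a walk to the tail of e, continued along another edge e2 leaving the same
  vertex, avoids e altogether (acyclicity keeps e off both pieces).\<close>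
lemma reroute:
  assumes r: "epath H ta he x r (ta e)" and e: "e \<in> H" and e2: "e2 \<in> H"
    and same_tail: "ta e2 = ta e" and ne: "e2 \<noteq> e" and q: "epath H ta he (he e2) q y"
  shows "epath (H - {e}) ta he x (r @ e2 # q) y"
proof -
  have eE: "e \<in> E" "e2 \<in> E" using e e2 HE by auto
  have "e \<notin> set r"
  proof
    assume "e \<in> set r"
    then obtain r2 where "epath H ta he (he e) r2 (ta e)" using epath_split_at[OF r] by blast
    then show False using acyclic_no_return[OF acyc HE eE(1)] by blast
  qed
  moreover have "e \<notin> set q"
  proof
    assume "e \<in> set q"
    then obtain q1 where "epath H ta he (he e2) q1 (ta e2)"
      using epath_split_at[OF q] same_tail by metis
    then show False using acyclic_no_return[OF acyc HE eE(2)] by blast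
  qed
  moreover have "epath H ta he x (r @ e2 # q) y" using r e2 same_tail q by (auto simp: epath_append)
  ultimately show ?thesis using ne by (intro epath_remove) auto
qed

text \<open>Each is critical for some terminal; a case distinction
  on these two terminals (there are only two) always produces a rerouting that
  contradicts criticality.\<close>
lemma no_branching:
  assumes e: "e \<in> H" and e2: "e2 \<in> H" and same_tail: "ta e2 = ta e" and ne: "e \<noteq> e2"
    and t: "t \<in> {t1, t2}"
    and p: "epath H ta he (he e) p t" and q: "epath H ta he (he e2) q t"
  shows False
proof -
  obtain i t' r1 r2 where t': "t' \<in> {t1, t2}"
    and r1: "epath H ta he (s i) r1 (ta e)" and r2: "epath H ta he (he e) r2 t'"
    and cut1: "\<forall>p. \<not> epath (H - {e}) ta he (s i) p t'"
    using critical_edge[OF e] by blast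
  obtain j t'' r1' where t'': "t'' \<in> {t1, t2}"
    and r1': "epath H ta he (s j) r1' (ta e2)"
    and cut2: "\<forall>p. \<not> epath (H - {e2}) ta he (s j) p t''"
    using critical_edge[OF e2] by blast
  consider "t' = t" | "t'' = t" | "t'' = t'" using t t' t'' by auto
  then show False
  proof cases
    case 1
    then show False using reroute[OF r1 e e2 same_tail ne[symmetric] q] cut1 by blast
  next
    case 2
    then show False using reroute[OF r1' e2 e same_tail[symmetric] ne p] cut2 by blast
  next
    case 3
    have "epath (H - {e2}) ta he (s j) (r1' @ e # r2) t'"
      using reroute[OF r1' e2 e same_tail[symmetric] ne r2] .
    then show False using 3 cut2 by blast
  qed
qed

lemma path_to_terminal_unique:
  "t \<in> {t1, t2} \<Longrightarrow> epath H ta he u p t \<Longrightarrow> epath H ta he u q t \<Longrightarrow> p = q"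
proof (induction p arbitrary: u q)
  case Nil
  then show ?case using HE sinks by (cases q) auto
next
  case (Cons e p)
  then obtain e2 q' where q: "q = e2 # q'" using HE sinks by (cases q) auto
  show ?case
  proof (cases "e = e2")
    case True
    then show ?thesis using Cons q by auto
  next
    case False
    then show ?thesis using no_branching[of e e2 t p q'] Cons.prems q by auto
  qed
qed

text \<open>If x \<noteq> w and w leads to a terminal, then among the H-edges entering w there is
  exactly one whose tail is reached from x when x reaches w, and none otherwise (two such
  edges would give two H-paths from x to the terminal).  Stated as a sum of a constant over
  these edges, the form used by the code below.\<close>
lemma entering_edges_sum:
  assumes r: "epath H ta he w r t" and t: "t \<in> {t1, t2}" and xw: "x \<noteq> w"
  shows "(\<Sum>e\<in>in_edges E he w. if e \<in> H \<and> (\<exists>p. epath H ta he x p (ta e)) then c else 0)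
     = (if \<exists>p. epath H ta he x p w then c else (0::'a::comm_monoid_add))"
proof -
  let ?P = "\<lambda>e. e \<in> H \<and> (\<exists>p. epath H ta he x p (ta e))"
  have fin: "finite (in_edges E he w)" using finE by (simp add: in_edges_def)
  have unique: "e1 = e2" if entering: "e1 \<in> in_edges E he w" "e2 \<in> in_edges E he w" "?P e1" "?P e2" for e1 e2
  proof -
    obtain p1 p2 where "epath H ta he x p1 (ta e1)" "epath H ta he x p2 (ta e2)" using entering by blast
    then have "epath H ta he x ((p1 @ [e1]) @ r) t" "epath H ta he x ((p2 @ [e2]) @ r) t"
      using entering r by (auto simp: epath_append in_edges_def)
    then show ?thesis using path_to_terminal_unique[OF t] by fastforce
  qed
  show ?thesis
  proof (cases "\<exists>p. epath H ta he x p w")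
    case True
    then obtain q e0 where "epath H ta he x q (ta e0)" "e0 \<in> H" "he e0 = w"
      using epath_last_edge xw by metis
    then have e0: "e0 \<in> in_edges E he w" "?P e0" using HE by (auto simp: in_edges_def)
    have "(\<Sum>e\<in>in_edges E he w. if ?P e then c else 0) = (\<Sum>e\<in>in_edges E he w. if e = e0 then c else 0)"
      using unique e0 by (intro sum.cong) auto
    also have "\<dots> = c" using e0 fin by simp
    finally show ?thesis using True by simp
  next
    case False
    have "\<not> ?P e" if "e \<in> in_edges E he w" for e
    proof
      assume "?P e"
      then obtain p where "epath H ta he x p (ta e)" "e \<in> H" by blast
      then have "epath H ta he x (p @ [e]) w" using that by (simp add: epath_snoc in_edges_def)
      then show False using False by blast
    qed
    then have "(\<Sum>e\<in>in_edges E he w. if ?P e then c else 0) = 0"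
      by (intro sum.neutral) auto
    then show ?thesis using False by simp
  qed
qed

section \<open>The reachability code\<close>

definition reached_by :: "'v \<Rightarrow> nat set" where
  "reached_by w = {k\<in>{1..n}. \<exists>p. epath H ta he (s k) p w}"

definition reach_sum :: "(nat \<Rightarrow> 'f::field) \<Rightarrow> 'v \<Rightarrow> 'f" where
  "reach_sum X w = (\<Sum>k\<in>{1..n}. if k \<in> reached_by w then X k else 0)"

definition reach_symbol :: "(nat \<Rightarrow> 'f::field) \<Rightarrow> 'e \<Rightarrow> 'f" where
  "reach_symbol X e = (if e \<in> H then reach_sum X (ta e) else 0)"

lemma reach_symbol_inflow:
  assumes "epath H ta he w r t" and "t \<in> {t1, t2}" and "w \<notin> s ` {1..n}"
  shows "(\<Sum>e\<in>in_edges E he w. if e \<in> H then reach_symbol X e else 0) = reach_sum X w"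
proof -
  have "(\<Sum>e\<in>in_edges E he w. if e \<in> H then reach_symbol X e else 0)
      = (\<Sum>e\<in>in_edges E he w. \<Sum>k\<in>{1..n}. if e \<in> H \<and> k \<in> reached_by (ta e) then X k else 0)"
    by (intro sum.cong) (auto simp: reach_symbol_def reach_sum_def)
  also have "\<dots> = (\<Sum>k\<in>{1..n}. \<Sum>e\<in>in_edges E he w. if e \<in> H \<and> k \<in> reached_by (ta e) then X k else 0)"
    by (rule sum.swap)
  also have "\<dots> = reach_sum X w"
    unfolding reach_sum_def
  proof (rule sum.cong[OF refl])
    fix k assume k: "k \<in> {1..n}"
    then have "s k \<noteq> w" using assms(3) by auto
    from entering_edges_sum[OF assms(1,2) this, of "X k"] k
    show "(\<Sum>e\<in>in_edges E he w. if e \<in> H \<and> k \<in> reached_by (ta e) then X k else 0)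
        = (if k \<in> reached_by w then X k else 0)"
      by (simp add: reached_by_def)
  qed
  finally show ?thesis .
qed

text \<open>The reachability code is a linear network code with all coefficients 1 on H: on an
  edge leaving source s i only s i itself is reached (sources have no in-edges, s is
  injective), and a non-source tail of an H-edge leads to a terminal.\<close>
lemma reach_code_symbols:
  assumes inj: "inj_on s {1..n}" and no_in: "\<forall>i\<in>{1..n}. in_edges E he (s i) = {}"
  shows "linear_code_symbols E ta he n s (\<lambda>e. if e \<in> H then 1 else 0)
           (\<lambda>e' e. if e' \<in> H \<and> e \<in> H then 1 else 0) X (reach_symbol X)"
  unfolding linear_code_symbols_def
proof (intro ballI conjI impI)
  fix e i assume "e \<in> E" and i: "i \<in> {1..n}" and tail: "ta e = s i"
  have "k = i" if k: "k \<in> reached_by (s i)" for k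
  proof -
    obtain p where p: "epath H ta he (s k) p (s i)" and "k \<in> {1..n}"
      using k by (auto simp: reached_by_def)
    have "s k = s i"
    proof (rule ccontr)
      assume "s k \<noteq> s i"
      then obtain q e' where "e' \<in> H" "he e' = s i" using epath_last_edge[OF p] by blast
      then show False using no_in i HE by (auto simp: in_edges_def)
    qed
    then show "k = i" using inj \<open>k \<in> {1..n}\<close> i by (meson inj_onD)
  qed
  moreover have "i \<in> reached_by (s i)" using i by (auto simp: reached_by_def intro: exI[of _ "[]"])
  ultimately have "reached_by (s i) = {i}" by blast
  then show "reach_symbol X e = (if e \<in> H then 1 else 0) * X i"
    using i by (simp add: reach_symbol_def reach_sum_def tail)
next
  fix e assume "e \<in> E" and not_src: "ta e \<notin> s ` {1..n}"
  show "reach_symbol X e = (\<Sum>e'\<in>in_edges E he (ta e). (if e' \<in> H \<and> e \<in> H then 1 else 0) * reach_symbol X e')"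
  proof (cases "e \<in> H")
    case True
    then obtain t r where t: "t \<in> {t1, t2}" and r: "epath H ta he (he e) r t"
      using critical_edge by blast
    have "epath H ta he (ta e) (e # r) t" using True r by simp
    have "(\<Sum>e'\<in>in_edges E he (ta e). (if e' \<in> H \<and> e \<in> H then 1 else 0) * reach_symbol X e')
        = (\<Sum>e'\<in>in_edges E he (ta e). if e' \<in> H then reach_symbol X e' else 0)"
      using True by (intro sum.cong) auto
    also have "\<dots> = reach_sum X (ta e)"
      by (rule reach_symbol_inflow[OF \<open>epath H ta he (ta e) (e # r) t\<close> t not_src])
    finally show ?thesis using True by (simp add: reach_symbol_def)
  qed (simp add: reach_symbol_def)
qed

text \<open>Decoding: a terminal t that is no source adds up its incoming H-symbols and obtains
  the sum of all source symbols, since every source reaches t.\<close>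
lemma reach_code_decodes:
  assumes t: "t \<in> {t1, t2}" and not_src: "t \<notin> s ` {1..n}"
  shows "\<exists>dec. \<forall>X. dec (restrict (reach_symbol X) (in_edges E he t)) = (\<Sum>i=1..n. X i)"
proof (intro exI allI)
  fix X :: "nat \<Rightarrow> 'f::field"
  have "reached_by t = {1..n}"
    using connecting t unfolding connects_def reached_by_def by auto
  then have "reach_sum X t = (\<Sum>i=1..n. X i)" by (simp add: reach_sum_def)
  moreover have "(\<Sum>e\<in>in_edges E he t. if e \<in> H then restrict (reach_symbol X) (in_edges E he t) e else 0)
      = (\<Sum>e\<in>in_edges E he t. if e \<in> H then reach_symbol X e else 0)"
    by (intro sum.cong) auto
  ultimately show "(\<lambda>g. \<Sum>e\<in>in_edges E he t. if e \<in> H then g e else 0)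
                     (restrict (reach_symbol X) (in_edges E he t)) = (\<Sum>i=1..n. X i)"
    using reach_symbol_inflow[of t "[]" t X] t not_src by simp
qed

end

theorem theorem2:
  fixes V :: "'v set" and E :: "'e set" and tail head :: "'e \<Rightarrow> 'v"
    and n :: nat and s :: "nat \<Rightarrow> 'v" and t1 t2 :: 'v and m :: nat
  assumes net: "network V E tail head"
    and src_inj: "inj_on s {1..n}"
    and src: "\<forall>i\<in>{1..n}. s i \<in> V \<and> in_edges E head (s i) = {}"
    and src_all: "\<forall>v\<in>V. in_edges E head v = {} \<longrightarrow> v \<in> s ` {1..n}"
    and terms: "t1 \<in> V" "t2 \<in> V" "t1 \<noteq> t2"
       "out_edges E tail t1 = {}" "out_edges E tail t2 = {}"
    and term_all: "\<forall>v\<in>V. out_edges E tail v = {} \<longrightarrow> v = t1 \<or> v = t2"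
    and conn: "\<forall>i\<in>{1..n}. \<forall>t\<in>{t1, t2}. max_flow V E tail head (s i) t \<ge> 1"
    and field: "CARD('f::{field, finite}) = 2 ^ m"
  shows "\<exists>(a :: 'e \<Rightarrow> 'f) (\<beta> :: 'e \<Rightarrow> 'e \<Rightarrow> 'f) (Y :: (nat \<Rightarrow> 'f) \<Rightarrow> 'e \<Rightarrow> 'f).
           (\<forall>X. linear_code_symbols E tail head n s a \<beta> X (Y X)) \<and>
           (\<forall>t\<in>{t1, t2}. \<exists>dec. \<forall>X.
               dec (restrict (Y X) (in_edges E head t)) = (\<Sum>i=1..n. X i))"
proof -
  have finE: "finite E" and acyc: "acyclic {(tail e, head e) | e. e \<in> E}"
    using net by (auto simp: network_def)
  have paths: "s i \<noteq> t \<and> (\<exists>p. epath E tail head (s i) p t)"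
    if "i \<in> {1..n}" and "t \<in> {t1, t2}" for i t
    using max_flow_path[OF net] that src terms(4,5) conn by blast
  then have "connects E tail head n s {t1, t2}" unfolding connects_def by blast
  then obtain H where "H \<subseteq> E" "connects H tail head n s {t1, t2}"
    "\<forall>e\<in>H. \<not> connects (H - {e}) tail head n s {t1, t2}"
    using minimal_connecting_subset[OF finE] by meson
  then interpret minimal_connection E tail head n s t1 t2 H
    using acyc finE terms(4,5) by unfold_locales (auto simp: out_edges_def)
  have "\<forall>t\<in>{t1, t2}. \<exists>dec. \<forall>X. dec (restrict (reach_symbol X) (in_edges E head t)) = (\<Sum>i=1..n. X i)"
    using reach_code_decodes paths by blast
  moreover have "\<forall>X. linear_code_symbols E tail head n s (\<lambda>e. if e \<in> H then 1 else 0)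
      (\<lambda>e' e. if e' \<in> H \<and> e \<in> H then 1 else 0) X (reach_symbol X)"
    using reach_code_symbols[OF src_inj] src by blast
  ultimately show ?thesis by blast
qed

end
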